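(* Let $\nu \geq 1$ and $\delta > 0$ be real numbers, let $s \geq 4$ be an even natural number, and let $A$ be a finite non-empty set of real numbers satisfying $E_s(A) = |A|^{2s - \nu}$ and $E_{s/2}(A) \leq |A|^{s - \nu + \delta}$. Then there exists $G \subseteq A^s$ such that \[ |G| > |A|^{s - \delta}/2 \quad \text{and} \quad |\Sigma(G)| \leq 4 |A|^{\nu}, \] where $\Sigma(G) = \{a_1 + \dots + a_s : (a_1, \dots, a_s) \in G\}$.
   Context: For a finite set $X$ of reals and $t \in \mathbb{N}$, $E_t(X) = |\{(x_1,\dots,x_{2t}) \in X^{2t} : x_1 + \dots + x_t = x_{t+1} + \dots + x_{2t}\}|$. *)

theory Defs
  imports "HOL-Analysis.Analysis" "HOL-Library.FuncSet"
begin

definition additive_energy :: "nat \<Rightarrow> real set \<Rightarrow> nat" where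
  "additive_energy t X = card {x \<in> {0..<2*t} \<rightarrow>\<^sub>E X.
      (\<Sum>i<t. x i) = (\<Sum>i\<in>{t..<2*t}. x i)}"

definition tuple_sums :: "nat \<Rightarrow> (nat \<Rightarrow> real) set \<Rightarrow> real set" where
  "tuple_sums s G = (\<lambda>a. \<Sum>i<s. a i) ` G"

end

theory Submission
  imports Defs
begin

text \<open>Let \<open>r x\<close> be the number of \<open>s\<close>-tuples over \<open>A\<close> with sum \<open>x\<close>, so that
  \<open>E\<^sub>s(A) = \<Sum>\<^sub>x r(x)\<^sup>2\<close>. Splitting a tuple into its two halves and applying AM-GM gives
  \<open>r x \<le> E\<^sub>s\<^sub>/\<^sub>2(A)\<close> for every \<open>x\<close>. Take for \<open>G\<close> the tuples whose sum is popular, i.e.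
  \<open>r x \<ge> E\<^sub>s(A) / (4 |A|\<^sup>s)\<close>. The other tuples contribute at most \<open>E\<^sub>s(A) / 4\<close> to
  \<open>E\<^sub>s(A)\<close>, so \<open>|G| E\<^sub>s\<^sub>/\<^sub>2(A) \<ge> 3/4 E\<^sub>s(A)\<close>; and each popular sum is hit by at least
  \<open>|A|\<^sup>s\<^sup>-\<^sup>\<nu> / 4\<close> of the \<open>|A|\<^sup>s\<close> tuples, so there are at most \<open>4 |A|\<^sup>\<nu>\<close> of them.\<close>

definition rep_count :: "'a set \<Rightarrow> ('a \<Rightarrow> 'b) \<Rightarrow> 'b \<Rightarrow> nat" where
  "rep_count X f y = card {a \<in> X. f a = y}"

lemma sum_comp_eq_sum_rep_count:
  fixes h :: "'b \<Rightarrow> 'c::comm_semiring_1"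
  assumes "finite X" "finite W" "f ` X \<subseteq> W"
  shows "(\<Sum>a\<in>X. h (f a)) = (\<Sum>y\<in>W. of_nat (rep_count X f y) * h y)"
proof -
  have "(\<Sum>a\<in>X. h (f a)) = (\<Sum>y\<in>W. \<Sum>a\<in>{a\<in>X. f a = y}. h (f a))"
    using sum.group[OF assms, of "\<lambda>a. h (f a)"] by simp
  also have "\<dots> = (\<Sum>y\<in>W. of_nat (rep_count X f y) * h y)"
    by (rule sum.cong) (auto simp: rep_count_def)
  finally show ?thesis .
qed

lemma sum_rep_count_le_card:
  assumes "finite X"
  shows "(\<Sum>y\<in>B. rep_count X f y) \<le> card X"
proof (cases "finite B")
  case True
  let ?S = "{a \<in> X. f a \<in> B}"
  have "(\<Sum>y\<in>B. rep_count X f y) = (\<Sum>y\<in>B. card {a \<in> ?S. f a = y})"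
    by (rule sum.cong) (auto simp: rep_count_def intro: arg_cong[where f = card])
  also have "\<dots> = card ?S"
    using sum.group[of ?S B f "\<lambda>_. 1::nat"] assms True by auto
  also have "\<dots> \<le> card X"
    using assms by (intro card_mono) auto
  finally show ?thesis .
qed simp

lemma card_pairs_eq_sum_rep_count:
  assumes "finite X"
  shows "card {p \<in> X \<times> X. f (fst p) = f (snd p)} = (\<Sum>a\<in>X. rep_count X f (f a))"
proof -
  have "{p \<in> X \<times> X. f (fst p) = f (snd p)} = Sigma X (\<lambda>a. {b \<in> X. f b = f a})"
    by auto
  then show ?thesis
    using assms by (simp add: rep_count_def)
qed

lemma card_pairs_add_eq_sum_rep_count:
  fixes f :: "'a \<Rightarrow> 'b::ab_group_add"
  assumes "finite X"
  shows "card {p \<in> X \<times> X. f (fst p) + f (snd p) = x} = (\<Sum>a\<in>X. rep_count X f (x - f a))"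
proof -
  have "{p \<in> X \<times> X. f (fst p) + f (snd p) = x} = Sigma X (\<lambda>a. {b \<in> X. f b = x - f a})"
    by (auto simp: algebra_simps)
  then show ?thesis
    using assms by (simp add: rep_count_def)
qed

text \<open>With \<open>r = rep_count X f\<close>, the two sides are \<open>\<Sum>y. r y * r (x - y)\<close> and
  \<open>\<Sum>y. r y * r y\<close>: compare termwise by AM-GM, using that \<open>y \<mapsto> x - y\<close> permutes a range
  \<open>W\<close> closed under it.\<close>

lemma card_pairs_add_le_card_pairs_eq:
  fixes f :: "'a \<Rightarrow> 'b::ab_group_add"
  assumes "finite X"
  shows "card {p \<in> X \<times> X. f (fst p) + f (snd p) = x} \<le> card {p \<in> X \<times> X. f (fst p) = f (snd p)}"
proof -
  define W where "W = f ` X \<union> (\<lambda>y. x - y) ` f ` X"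
  have W: "finite W" "f ` X \<subseteq> W"
    using assms by (auto simp: W_def)
  let ?r = "\<lambda>y. real (rep_count X f y)"
  have reflect: "bij_betw (\<lambda>y. x - y) W W"
    by (rule bij_betw_byWitness[where f' = "\<lambda>y. x - y"]) (auto simp: W_def image_iff)
  have "real (card {p \<in> X \<times> X. f (fst p) + f (snd p) = x}) = (\<Sum>y\<in>W. ?r y * ?r (x - y))"
    using sum_comp_eq_sum_rep_count[OF assms W, of "\<lambda>y. ?r (x - y)"]
    by (simp add: card_pairs_add_eq_sum_rep_count[OF assms])
  also have "\<dots> \<le> (\<Sum>y\<in>W. (?r y * ?r y + ?r (x - y) * ?r (x - y)) / 2)"
  proof (rule sum_mono)
    fix y
    have "0 \<le> (?r y - ?r (x - y))\<^sup>2" by simp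
    then show "?r y * ?r (x - y) \<le> (?r y * ?r y + ?r (x - y) * ?r (x - y)) / 2"
      by (simp add: power2_eq_square algebra_simps)
  qed
  also have "\<dots> = (\<Sum>y\<in>W. ?r y * ?r y)"
    using sum.reindex_bij_betw[OF reflect, of "\<lambda>y. ?r y * ?r y"]
    by (simp add: sum_divide_distrib[symmetric] sum.distrib)
  also have "\<dots> = real (card {p \<in> X \<times> X. f (fst p) = f (snd p)})"
    using sum_comp_eq_sum_rep_count[OF assms W, of ?r]
    by (simp add: card_pairs_eq_sum_rep_count[OF assms])
  finally show ?thesis by simp
qed

lemma popular_fibres:
  assumes "finite X" and rep_le: "\<And>y. real (rep_count X f y) \<le> M"
  defines "E \<equiv> \<Sum>a\<in>X. real (rep_count X f (f a))"
  shows "\<exists>G \<subseteq> X. 3/4 * E \<le> real (card G) * M \<and>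
    real (card (f ` G)) * E \<le> 4 * real (card X) ^ 2"
proof (cases "X = {}")
  case False
  define T where "T = E / (4 * card X)"
  define G where "G = {a \<in> X. T \<le> real (rep_count X f (f a))}"
  have GX: "G \<subseteq> X" by (auto simp: G_def)
  have XT: "real (card X) * T = E / 4"
    using False assms(1) by (simp add: T_def)
  have T_nonneg: "0 \<le> T"
    by (simp add: T_def E_def sum_nonneg)
  have "E = (\<Sum>a\<in>G. real (rep_count X f (f a))) + (\<Sum>a\<in>X - G. real (rep_count X f (f a)))"
    using sum.subset_diff[OF GX assms(1)] by (simp add: E_def add.commute)
  also have "\<dots> \<le> (\<Sum>a\<in>G. M) + (\<Sum>a\<in>X - G. T)"
    by (intro add_mono sum_mono) (auto simp: G_def rep_le)
  also have "\<dots> \<le> real (card G) * M + real (card X) * T"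
    using card_mono[OF assms(1) Diff_subset, of G] T_nonneg by (simp add: mult_right_mono)
  finally have large: "3/4 * E \<le> real (card G) * M"
    using XT by simp
  have "real (card (f ` G)) * T = (\<Sum>y\<in>f ` G. T)"
    by simp
  also have "\<dots> \<le> (\<Sum>y\<in>f ` G. real (rep_count X f y))"
    by (rule sum_mono) (auto simp: G_def)
  also have "\<dots> \<le> real (card X)"
    using sum_rep_count_le_card[OF assms(1), where B = "f ` G" and f = f] by (simp flip: of_nat_sum)
  finally have "real (card (f ` G)) * T * (4 * real (card X)) \<le> real (card X) * (4 * real (card X))"
    by (rule mult_right_mono) simp
  also have "real (card (f ` G)) * T * (4 * real (card X)) = real (card (f ` G)) * E"
    using XT by (simp add: algebra_simps)
  finally have "real (card (f ` G)) * E \<le> 4 * real (card X) ^ 2"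
    by (simp add: power2_eq_square algebra_simps)
  with large GX show ?thesis
    by blast
qed (auto simp: E_def)

lemma bij_betw_split_tuple:
  fixes m n :: nat
  shows "bij_betw (\<lambda>c. (restrict c {0..<m}, \<lambda>i\<in>{0..<n}. c (i + m)))
     ({0..<m + n} \<rightarrow>\<^sub>E A) (({0..<m} \<rightarrow>\<^sub>E A) \<times> ({0..<n} \<rightarrow>\<^sub>E A))"
proof (rule bij_betw_byWitness[where f' =
      "\<lambda>(u, v) i. if i < m then u i else if i < m + n then v (i - m) else undefined"])
qed (auto simp: PiE_def extensional_def Pi_def fun_eq_iff)

lemma card_tuples_split_sums:
  fixes m n :: nat and A :: "'b::comm_monoid_add set"
  shows "card {c \<in> {0..<m + n} \<rightarrow>\<^sub>E A. P (\<Sum>i<m. c i) (\<Sum>i\<in>{m..<m + n}. c i)} =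
    card {p \<in> ({0..<m} \<rightarrow>\<^sub>E A) \<times> ({0..<n} \<rightarrow>\<^sub>E A). P (\<Sum>i<m. fst p i) (\<Sum>i<n. snd p i)}"
proof -
  have "(\<Sum>i\<in>{m..<m + n}. c i) = (\<Sum>i<n. c (i + m))" for c :: "nat \<Rightarrow> 'b"
    using sum.shift_bounds_nat_ivl[of c 0 m n] by (simp add: add.commute atLeast0LessThan)
  then have "bij_betw (\<lambda>c. (restrict c {0..<m}, \<lambda>i\<in>{0..<n}. c (i + m)))
      {c \<in> {0..<m + n} \<rightarrow>\<^sub>E A. P (\<Sum>i<m. c i) (\<Sum>i\<in>{m..<m + n}. c i)}
      {p \<in> ({0..<m} \<rightarrow>\<^sub>E A) \<times> ({0..<n} \<rightarrow>\<^sub>E A). P (\<Sum>i<m. fst p i) (\<Sum>i<n. snd p i)}"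
    by (intro bij_betw_Collect[OF bij_betw_split_tuple]) simp
  then show ?thesis
    by (rule bij_betw_same_card)
qed

lemma additive_energy_eq_card_pairs:
  "additive_energy t A =
    card {p \<in> ({0..<t} \<rightarrow>\<^sub>E A) \<times> ({0..<t} \<rightarrow>\<^sub>E A). (\<Sum>i<t. fst p i) = (\<Sum>i<t. snd p i)}"
  using card_tuples_split_sums[where P = "(=)" and m = t and n = t and A = A]
  by (simp add: additive_energy_def mult_2)

lemma rep_count_tuple_sum_le_additive_energy:
  assumes "finite A"
  shows "rep_count ({0..<2 * t} \<rightarrow>\<^sub>E A) (\<lambda>a. \<Sum>i<2 * t. a i) x \<le> additive_energy t A"
proof -
  have "(\<Sum>i<t + t. c i) = (\<Sum>i<t. c i) + (\<Sum>i\<in>{t..<t + t}. c i)" for c :: "nat \<Rightarrow> real"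
    using sum.atLeastLessThan_concat[of 0 t "t + t" c] by (simp add: atLeast0LessThan)
  then have "rep_count ({0..<2 * t} \<rightarrow>\<^sub>E A) (\<lambda>a. \<Sum>i<2 * t. a i) x =
      card {c \<in> {0..<t + t} \<rightarrow>\<^sub>E A. (\<Sum>i<t. c i) + (\<Sum>i\<in>{t..<t + t}. c i) = x}"
    by (simp add: rep_count_def mult_2)
  also have "\<dots> = card {p \<in> ({0..<t} \<rightarrow>\<^sub>E A) \<times> ({0..<t} \<rightarrow>\<^sub>E A).
      (\<Sum>i<t. fst p i) + (\<Sum>i<t. snd p i) = x}"
    by (rule card_tuples_split_sums)
  also have "\<dots> \<le> card {p \<in> ({0..<t} \<rightarrow>\<^sub>E A) \<times> ({0..<t} \<rightarrow>\<^sub>E A).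
      (\<Sum>i<t. fst p i) = (\<Sum>i<t. snd p i)}"
    using card_pairs_add_le_card_pairs_eq[of "{0..<t} \<rightarrow>\<^sub>E A" "\<lambda>a. \<Sum>i<t. a i" x] assms
    by (simp add: finite_PiE)
  also have "\<dots> = additive_energy t A"
    by (rule additive_energy_eq_card_pairs[symmetric])
  finally show ?thesis .
qed

lemma popular_tuple_sums:
  assumes "finite A"
  shows "\<exists>G \<subseteq> {0..<2 * t} \<rightarrow>\<^sub>E A.
    3/4 * real (additive_energy (2 * t) A) \<le> real (card G) * real (additive_energy t A) \<and>
    real (card (tuple_sums (2 * t) G)) * real (additive_energy (2 * t) A) \<le> 4 * real (card A) ^ (4 * t)"
proof -
  define X where "X = {0..<2 * t} \<rightarrow>\<^sub>E A"
  define F where "F = (\<lambda>a :: nat \<Rightarrow> real. \<Sum>i<2 * t. a i)"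
  have X_fin: "finite X"
    using assms by (simp add: X_def finite_PiE)
  have card_X: "real (card X) ^ 2 = real (card A) ^ (4 * t)"
    by (simp add: X_def card_PiE flip: power_mult)
  have energy: "(\<Sum>a\<in>X. real (rep_count X F (F a))) = real (additive_energy (2 * t) A)"
    using additive_energy_eq_card_pairs[of "2 * t" A] card_pairs_eq_sum_rep_count[OF X_fin, of F]
    by (simp add: X_def F_def flip: of_nat_sum)
  have "real (rep_count X F y) \<le> real (additive_energy t A)" for y
    using rep_count_tuple_sum_le_additive_energy[OF assms, of t y] by (simp add: X_def F_def)
  from popular_fibres[OF X_fin this] show ?thesis
    unfolding energy card_X by (simp add: X_def F_def tuple_sums_def)
qed

theorem lemma8p1:
  fixes \<nu> \<delta> :: real and s :: nat and A :: "real set"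
  assumes "\<nu> \<ge> 1" and "\<delta> > 0"
    and "s \<ge> 4" and "even s"
    and "finite A" and "A \<noteq> {}"
    and "real (additive_energy s A) = real (card A) powr (2 * real s - \<nu>)"
    and "real (additive_energy (s div 2) A) \<le> real (card A) powr (real s - \<nu> + \<delta>)"
  shows "\<exists>G \<subseteq> {0..<s} \<rightarrow>\<^sub>E A.
           real (card G) > real (card A) powr (real s - \<delta>) / 2 \<and>
           real (card (tuple_sums s G)) \<le> 4 * real (card A) powr \<nu>"
proof -
  obtain k where s: "s = 2 * k"
    using \<open>even s\<close> by blast
  define N where "N = real (card A)"
  have N_pos: "0 < N"
    using assms(5,6) by (simp add: N_def card_gt_0_iff)
  have "real (card A) ^ (4 * k) = N powr (2 * s)"
    using N_pos by (simp add: N_def s powr_realpow flip: of_nat_mult)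
  with popular_tuple_sums[OF assms(5), of k] assms(7) obtain G where "G \<subseteq> {0..<s} \<rightarrow>\<^sub>E A"
    and large: "3/4 * N powr (2 * s - \<nu>) \<le> real (card G) * real (additive_energy k A)"
    and few_sums: "real (card (tuple_sums s G)) * N powr (2 * s - \<nu>) \<le> 4 * N powr (2 * s)"
    by (auto simp: s N_def)
  have "3/4 * N powr (s - \<delta>) * N powr (s - \<nu> + \<delta>) = 3/4 * N powr (2 * s - \<nu>)"
    by (simp add: powr_add[symmetric])
  also have "\<dots> \<le> real (card G) * N powr (s - \<nu> + \<delta>)"
    using large assms(8) by (simp add: s N_def mult_left_mono order_trans)
  finally have "3/4 * N powr (s - \<delta>) \<le> real (card G)"
    using N_pos by simp
  moreover have "0 < N powr (s - \<delta>)"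
    using N_pos by simp
  ultimately have "N powr (s - \<delta>) / 2 < real (card G)"
    by linarith
  moreover have "real (card (tuple_sums s G)) * N powr (2 * s - \<nu>) \<le> 4 * N powr \<nu> * N powr (2 * s - \<nu>)"
    using few_sums by (simp add: mult.assoc flip: powr_add)
  then have "real (card (tuple_sums s G)) \<le> 4 * N powr \<nu>"
    using N_pos by simp
  ultimately show ?thesis
    using \<open>G \<subseteq> {0..<s} \<rightarrow>\<^sub>E A\<close> by (auto simp: N_def)
qed

end
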